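(* Let $p,q\in\mathbb N$, let $d=\gcd(p,q)$, and write $p=p'\cdot d$, $q=q'\cdot d$. Suppose $p\ge q'>1$ and $q\ge p'>1$. Then the number $m=p'\cdot q'\cdot d=p\cdot q'=q\cdot p'$ is antipalindromic both in base $p+1$ and in base $q+1$.
   Context: For an integer $b\ge 2$, every natural number $x$ has a unique base-$b$ expansion $x=a_\ell b^\ell+\dots+a_1b+a_0$ with $a_0,\dots,a_\ell\in\{0,1,\dots,b-1\}$ and $a_\ell\neq 0$. The number $x$ is antipalindromic in base $b$ if $a_j=b-1-a_{\ell-j}$ for all $j\in\{0,1,\dots,\ell\}$. *)

theory Defs
  imports Main
begin

definition digit :: "nat \<Rightarrow> nat \<Rightarrow> nat \<Rightarrow> nat" where
  "digit b x j = (x div b ^ j) mod b"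

definition top_index :: "nat \<Rightarrow> nat \<Rightarrow> nat" where
  "top_index b x = (THE l. b ^ l \<le> x \<and> x < b ^ (Suc l))"

text \<open>x is antipalindromic in base b: x has a base-b expansion a_l ... a_0 with
  a_l nonzero (so x \<ge> 1), and a_j = b - 1 - a_(l-j) for all j \<le> l.\<close>
definition antipalindromic :: "nat \<Rightarrow> nat \<Rightarrow> bool" where
  "antipalindromic b x \<longleftrightarrow> x \<ge> 1 \<and>
     (\<forall>j \<le> top_index b x. digit b x j = b - 1 - digit b x (top_index b x - j))"

end

theory Submission
  imports Defs
begin

text \<open>For 1 < k \<le> p the number p k = (k - 1)(p + 1) + (p + 1 - k) has the two digits
  k - 1 and p + 1 - k in base p + 1, and these add up to the largest digit p. Applied to
  m = p q' = q p' in both bases this is the theorem.\<close>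

lemma top_index_eqI:
  assumes "1 < b" "b ^ l \<le> x" "x < b ^ Suc l"
  shows "top_index b x = l"
  unfolding top_index_def
proof (rule the_equality)
  fix m assume "b ^ m \<le> x \<and> x < b ^ Suc m"
  then have "b ^ m < b ^ Suc l" "b ^ l < b ^ Suc m"
    using assms by linarith+
  then have "m < Suc l" "l < Suc m"
    using \<open>1 < b\<close> by (simp_all only: power_strict_increasing_iff)
  then show "m = l" by linarith
qed (use assms in blast)

lemma antipalindromic_two_digits:
  fixes b a0 a1 :: nat
  assumes "1 \<le> a1" and "a0 + a1 + 1 = b"
  shows "antipalindromic b (a1 * b + a0)"
proof -
  let ?x = "a1 * b + a0"
  have "a0 < b" "a1 < b" using assms by linarith+
  then have digit0: "digit b ?x 0 = a0" and digit1: "digit b ?x 1 = a1"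
    by (simp_all add: digit_def)
  have "b ^ 1 \<le> ?x"
    using \<open>1 \<le> a1\<close> by (simp add: add_increasing2)
  moreover have "?x < b ^ Suc 1"
  proof -
    have "?x < a1 * b + b" using \<open>a0 < b\<close> by simp
    also have "\<dots> = (a1 + 1) * b" by simp
    also have "\<dots> \<le> b * b" using \<open>a1 < b\<close> by (intro mult_le_mono1) simp
    finally show ?thesis by (simp add: power2_eq_square)
  qed
  ultimately have top: "top_index b ?x = 1"
    using assms by (intro top_index_eqI) auto
  have "\<forall>j \<le> 1. digit b ?x j = b - 1 - digit b ?x (1 - j)"
    using assms digit0 digit1 by (auto simp: le_Suc_eq)
  moreover have "1 \<le> ?x" using \<open>b ^ 1 \<le> ?x\<close> \<open>a1 < b\<close> by simp
  ultimately show ?thesis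
    unfolding antipalindromic_def top by blast
qed

lemma antipalindromic_mult:
  fixes p k :: nat
  assumes "1 < k" "k \<le> p"
  shows "antipalindromic (p + 1) (p * k)"
proof -
  have "p * k = (k - 1) * (p + 1) + (p + 1 - k)"
    using assms by (cases k) (auto simp: algebra_simps)
  moreover have "antipalindromic (p + 1) ((k - 1) * (p + 1) + (p + 1 - k))"
    using assms by (intro antipalindromic_two_digits) auto
  ultimately show ?thesis by simp
qed

theorem mainTheorem16:
  fixes p q :: nat
  defines "d \<equiv> gcd p q"
  defines "p' \<equiv> p div d"
  defines "q' \<equiv> q div d"
  assumes "p \<ge> q'" and "q' > 1" and "q \<ge> p'" and "p' > 1"
  shows "p' * q' * d = p * q' \<and> p * q' = q * p' \<and>
         antipalindromic (p + 1) (p' * q' * d) \<and> antipalindromic (q + 1) (p' * q' * d)"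
proof -
  have "p = p' * d" "q = q' * d"
    unfolding p'_def q'_def d_def by simp_all
  then have m_p: "p' * q' * d = p * q'" and m_q: "p' * q' * d = q * p'"
    by simp_all
  moreover from m_p m_q have "p * q' = q * p'" by simp
  moreover have "antipalindromic (p + 1) (p' * q' * d)"
    unfolding m_p using assms by (intro antipalindromic_mult) auto
  moreover have "antipalindromic (q + 1) (p' * q' * d)"
    unfolding m_q using assms by (intro antipalindromic_mult) auto
  ultimately show ?thesis by blast
qed

end
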